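(* Let $\sigma\in\mathbb R^{d}$ with $\sigma\ne0$, $\bar r_X\ge0$, and $0\le\underline c\le\bar c\le1$ with $\underline c<1$. For $r_X,c\in\mathbb R^d$ with $r_X'c\neq-1$ let $z_X(r_X,c)=\dfrac{r_X'\sigma\sqrt{1-\|c\|^2}}{1+r_X'c}$. Then $$\sup\{|z_X(r_X,c)|:\|r_X\|\le\bar r_X,\ \|c\|\in[\underline c,\bar c],\ \|c\|\ne1,\ r_X'c\ne-1\}=\bar z_X(\bar r_X,\underline c,\bar c),$$ where, with $m=\max\{\min\{\bar r_X,\bar c\},\underline c\}$, $\bar z_X(\bar r_X,\underline c,\bar c)=\dfrac{\bar r_X\|\sigma\|\sqrt{1-m^2}}{1-\bar r_Xm}$ if $\bar r_X\bar c<1$ and $\bar z_X(\bar r_X,\underline c,\bar c)=+\infty$ if $\bar r_X\bar c\ge1$.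
   Context: $\|\cdot\|$ is the Euclidean norm. *)

theory Defs
  imports "HOL-Analysis.Analysis"
begin

definition zX :: "real^'d \<Rightarrow> real^'d \<Rightarrow> real^'d \<Rightarrow> real" where
  "zX \<sigma> r c = (r \<bullet> \<sigma>) * sqrt (1 - (norm c)^2) / (1 + r \<bullet> c)"

definition zbarX :: "real^'d \<Rightarrow> real \<Rightarrow> real \<Rightarrow> real \<Rightarrow> ereal" where
  "zbarX \<sigma> rbar clo chi =
     (let m = max (min rbar chi) clo in
      if rbar * chi < 1 then ereal (rbar * norm \<sigma> * sqrt (1 - m^2) / (1 - rbar * m))
      else \<infinity>)"

end

theory Submission
  imports Defs "HOL-Real_Asymp.Real_Asymp"
begin

text \<open>
  With \<open>a = norm r\<close> and \<open>t = norm c\<close>, Cauchy-Schwarz gives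
  \<open>\<bar>zX \<sigma> r c\<bar> \<le> a * norm \<sigma> * sqrt (1 - t\<^sup>2) / (1 - a * t)\<close>, with equality when \<open>r\<close> points
  along \<open>\<sigma>\<close> and \<open>c\<close> against it.  The bound increases in \<open>a\<close>, so \<open>a = rbar\<close> is optimal, and
  \<open>t \<mapsto> sqrt (1 - t\<^sup>2) / (1 - rbar * t)\<close> increases up to its peak \<open>t = rbar\<close> and decreases
  afterwards, so over \<open>[clo, chi]\<close> it is maximal at the point \<open>m\<close> closest to \<open>rbar\<close>.
  If instead \<open>rbar * chi \<ge> 1\<close>, the denominator can be made arbitrarily small along collinear
  configurations.
\<close>

definition feasible :: "real \<Rightarrow> real \<Rightarrow> real \<Rightarrow> ((real^'d) \<times> (real^'d)) set" where
  "feasible rbar clo chi = {(r, c). norm r \<le> rbar \<and> clo \<le> norm c \<and> norm c \<le> chi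
                                     \<and> norm c \<noteq> 1 \<and> r \<bullet> c \<noteq> -1}"

lemma divide_one_minus_mult_mono:
  fixes a R t :: real
  assumes "0 \<le> a" "a \<le> R" "0 \<le> t" "R * t < 1"
  shows "a / (1 - a * t) \<le> R / (1 - R * t)"
proof -
  have "a * t \<le> R * t"
    using assms by (simp add: mult_right_mono)
  then have "1 - a * t > 0"
    using assms by linarith
  moreover have "a * (1 - R * t) \<le> R * (1 - a * t)"
    using assms by (simp add: algebra_simps)
  ultimately show ?thesis
    using assms(4) by (simp add: divide_simps)
qed

lemma sqrt_one_minus_square_divide_le_between:
  fixes R t m :: real
  assumes "0 \<le> t" "t \<le> 1" "0 \<le> m" "m \<le> 1" "R * t < 1" "R * m < 1"
    and between: "(t - m) * (R - m) \<le> 0"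
  shows "sqrt (1 - t\<^sup>2) / (1 - R * t) \<le> sqrt (1 - m\<^sup>2) / (1 - R * m)"
proof -
  have identity: "(1 - m\<^sup>2) * (1 - R * t)\<^sup>2 - (1 - t\<^sup>2) * (1 - R * m)\<^sup>2
      = ((R - m)\<^sup>2 + (1 - m\<^sup>2)) * (t - m)\<^sup>2 - 2 * ((t - m) * (R - m)) * (1 - R * m)"
    by algebra
  have "0 \<le> ((R - m)\<^sup>2 + (1 - m\<^sup>2)) * (t - m)\<^sup>2"
    using assms(3,4) by (simp add: power_le_one)
  moreover have "(t - m) * (R - m) * (1 - R * m) \<le> 0"
    using assms(6) between by (simp add: mult_nonpos_nonneg)
  ultimately have squares: "(1 - t\<^sup>2) * (1 - R * m)\<^sup>2 \<le> (1 - m\<^sup>2) * (1 - R * t)\<^sup>2"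
    using identity by linarith
  have "sqrt (1 - t\<^sup>2) * (1 - R * m) = sqrt ((1 - t\<^sup>2) * (1 - R * m)\<^sup>2)"
    using assms(6) by (simp add: real_sqrt_mult)
  also have "\<dots> \<le> sqrt ((1 - m\<^sup>2) * (1 - R * t)\<^sup>2)"
    using squares by (rule real_sqrt_le_mono)
  also have "\<dots> = sqrt (1 - m\<^sup>2) * (1 - R * t)"
    using assms(5) by (simp add: real_sqrt_mult)
  finally show ?thesis
    using assms(5,6) by (simp add: divide_simps mult.commute)
qed

lemma between_clamp:
  fixes t R clo chi :: real
  assumes "clo \<le> t" "t \<le> chi"
  shows "(t - max (min R chi) clo) * (R - max (min R chi) clo) \<le> 0"
  using assms by (auto simp: max_def min_def mult_le_0_iff)

lemma abs_zX_le:
  fixes \<sigma> r c :: "real^'d" and R :: real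
  assumes "norm r \<le> R" "norm c \<le> 1" "R * norm c < 1"
  shows "\<bar>zX \<sigma> r c\<bar> \<le> R * norm \<sigma> * (sqrt (1 - (norm c)\<^sup>2) / (1 - R * norm c))"
proof -
  define a t where "a = norm r" and "t = norm c"
  have "a * t \<le> R * t"
    using assms by (simp add: a_def t_def mult_right_mono)
  moreover have "\<bar>r \<bullet> c\<bar> \<le> a * t"
    unfolding a_def t_def by (rule Cauchy_Schwarz_ineq2)
  moreover have "R * t < 1"
    using assms(3) by (simp add: t_def)
  ultimately have denominator: "1 - a * t \<le> 1 + r \<bullet> c" "0 < 1 - a * t"
    by linarith+
  have numerator: "\<bar>r \<bullet> \<sigma>\<bar> \<le> a * norm \<sigma>"
    unfolding a_def by (rule Cauchy_Schwarz_ineq2)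
  have sqrt_nonneg: "0 \<le> sqrt (1 - t\<^sup>2)"
    using assms(2) by (simp add: t_def power_le_one)
  have "\<bar>zX \<sigma> r c\<bar> = \<bar>r \<bullet> \<sigma>\<bar> * sqrt (1 - t\<^sup>2) / (1 + r \<bullet> c)"
    unfolding zX_def t_def[symmetric] using denominator sqrt_nonneg
    by (simp add: abs_mult abs_divide)
  also have "\<dots> \<le> a * norm \<sigma> * sqrt (1 - t\<^sup>2) / (1 - a * t)"
    by (rule frac_le) (use numerator sqrt_nonneg denominator in \<open>auto intro: mult_right_mono\<close>)
  also have "\<dots> = norm \<sigma> * sqrt (1 - t\<^sup>2) * (a / (1 - a * t))"
    by simp
  also have "\<dots> \<le> norm \<sigma> * sqrt (1 - t\<^sup>2) * (R / (1 - R * t))"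
    using divide_one_minus_mult_mono[of a R t] assms sqrt_nonneg
    by (intro mult_left_mono) (auto simp: a_def t_def)
  also have "\<dots> = R * norm \<sigma> * (sqrt (1 - t\<^sup>2) / (1 - R * t))"
    by simp
  finally show ?thesis
    by (simp only: t_def)
qed

lemma zX_collinear:
  fixes \<sigma> :: "real^'d" and s t :: real
  assumes "\<sigma> \<noteq> 0" "0 \<le> t"
  shows "zX \<sigma> (s *\<^sub>R sgn \<sigma>) (- (t *\<^sub>R sgn \<sigma>)) = s * norm \<sigma> * sqrt (1 - t\<^sup>2) / (1 - s * t)"
proof -
  have "sgn \<sigma> \<bullet> sgn \<sigma> = 1" "sgn \<sigma> \<bullet> \<sigma> = norm \<sigma>"
    using assms(1) by (simp_all add: sgn_div_norm norm_eq_1 dot_square_norm power2_eq_square)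
  then show ?thesis
    using assms by (simp add: zX_def norm_sgn algebra_simps)
qed

lemma collinear_in_feasible:
  fixes \<sigma> :: "real^'d" and s t rbar clo chi :: real
  assumes "\<sigma> \<noteq> 0" "0 \<le> clo" "0 \<le> s" "s \<le> rbar" "clo \<le> t" "t \<le> chi" "t \<noteq> 1" "s * t \<noteq> 1"
  shows "(s *\<^sub>R sgn \<sigma>, - (t *\<^sub>R sgn \<sigma>)) \<in> feasible rbar clo chi"
proof -
  have "sgn \<sigma> \<bullet> sgn \<sigma> = 1"
    using assms(1) by (simp add: sgn_div_norm norm_eq_1 dot_square_norm power2_eq_square)
  then show ?thesis
    using assms by (auto simp: feasible_def norm_sgn)
qed

lemma SUP_ereal_eq_infinity_if_filterlim:
  fixes f :: "'a \<Rightarrow> real" and g :: "'b \<Rightarrow> 'a"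
  assumes "filterlim (\<lambda>x. f (g x)) at_top F" "F \<noteq> bot" "\<forall>\<^sub>F x in F. g x \<in> A"
  shows "(SUP y\<in>A. ereal (f y)) = \<infinity>"
proof -
  have exceeds: "\<exists>y\<in>A. B < f y" for B
  proof -
    have "\<forall>\<^sub>F x in F. g x \<in> A \<and> B < f (g x)"
      using assms(1,3) by (auto simp: filterlim_at_top_dense elim: eventually_mono intro: eventually_conj)
    then show ?thesis
      using eventually_happens'[OF assms(2)] by auto
  qed
  show ?thesis
    unfolding top_ereal_def[symmetric] SUP_eq_top_iff
  proof (intro allI impI)
    fix x :: ereal
    assume "x < top"
    then obtain B where "x < ereal B"
      using gt_ex by (cases x) auto
    then show "\<exists>y\<in>A. x < ereal (f y)"
      using exceeds[of B] by (metis less_ereal.simps(1) less_trans)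
  qed
qed

lemma SUP_abs_zX_feasible_finite:
  fixes \<sigma> :: "real^'d" and rbar clo chi :: real
  assumes "\<sigma> \<noteq> 0" "0 \<le> rbar" "0 \<le> clo" "clo \<le> chi" "chi \<le> 1" "clo < 1" "rbar * chi < 1"
  defines "m \<equiv> max (min rbar chi) clo"
  shows "(SUP rc \<in> feasible rbar clo chi. ereal \<bar>zX \<sigma> (fst rc) (snd rc)\<bar>)
           = ereal (rbar * norm \<sigma> * sqrt (1 - m\<^sup>2) / (1 - rbar * m))"
proof (rule antisym)
  have m: "clo \<le> m" "m \<le> chi" "0 \<le> m" "m \<le> 1"
    using assms(3-5) by (auto simp: m_def)
  have "rbar * m \<le> rbar * chi"
    using m assms(2) by (simp add: mult_left_mono)
  then have rbar_m: "rbar * m < 1"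
    using assms(7) by linarith
  have "m \<noteq> 1"
    using rbar_m assms(6) by (auto simp: m_def max_def min_def)
  have "ereal \<bar>zX \<sigma> r c\<bar> \<le> ereal (rbar * norm \<sigma> * sqrt (1 - m\<^sup>2) / (1 - rbar * m))"
    if "(r, c) \<in> feasible rbar clo chi" for r c
  proof -
    define t where "t = norm c"
    have t: "clo \<le> t" "t \<le> chi" "0 \<le> t"
      using that by (auto simp: feasible_def t_def)
    have "rbar * t \<le> rbar * chi"
      using t assms(2) by (simp add: mult_left_mono)
    then have rbar_t: "rbar * t < 1"
      using assms(7) by linarith
    have "\<bar>zX \<sigma> r c\<bar> \<le> rbar * norm \<sigma> * (sqrt (1 - t\<^sup>2) / (1 - rbar * t))"
      using abs_zX_le[of r rbar c \<sigma>] that t assms(5) rbar_t by (simp add: feasible_def t_def)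
    also have "\<dots> \<le> rbar * norm \<sigma> * (sqrt (1 - m\<^sup>2) / (1 - rbar * m))"
      using sqrt_one_minus_square_divide_le_between[of t m rbar] between_clamp[OF t(1,2), of rbar]
        t m assms(2,5) rbar_t rbar_m
      by (intro mult_left_mono) (auto simp: m_def)
    finally show ?thesis
      by simp
  qed
  then show "(SUP rc \<in> feasible rbar clo chi. ereal \<bar>zX \<sigma> (fst rc) (snd rc)\<bar>)
               \<le> ereal (rbar * norm \<sigma> * sqrt (1 - m\<^sup>2) / (1 - rbar * m))"
    by (intro SUP_least) auto
  have witness: "(rbar *\<^sub>R sgn \<sigma>, - (m *\<^sub>R sgn \<sigma>)) \<in> feasible rbar clo chi"
    using collinear_in_feasible[of \<sigma> clo rbar rbar m chi] assms(1-3) m \<open>m \<noteq> 1\<close> rbar_m by auto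
  have witness_value: "zX \<sigma> (rbar *\<^sub>R sgn \<sigma>) (- (m *\<^sub>R sgn \<sigma>))
                   = rbar * norm \<sigma> * sqrt (1 - m\<^sup>2) / (1 - rbar * m)"
    using zX_collinear[OF assms(1) m(3)] .
  have nonneg: "0 \<le> rbar * norm \<sigma> * sqrt (1 - m\<^sup>2) / (1 - rbar * m)"
    using m assms(2) rbar_m by (simp add: power_le_one)
  show "ereal (rbar * norm \<sigma> * sqrt (1 - m\<^sup>2) / (1 - rbar * m))
                     \<le> (SUP rc \<in> feasible rbar clo chi. ereal \<bar>zX \<sigma> (fst rc) (snd rc)\<bar>)"
    by (rule SUP_upper2[OF witness]) (simp only: fst_conv snd_conv witness_value abs_of_nonneg[OF nonneg] order_refl)
qed

lemma SUP_abs_zX_feasible_infinite: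
  fixes \<sigma> :: "real^'d" and rbar clo chi :: real
  assumes "\<sigma> \<noteq> 0" "0 \<le> clo" "clo \<le> chi" "chi \<le> 1" "clo < 1" "1 \<le> rbar * chi"
  shows "(SUP rc \<in> feasible rbar clo chi. ereal \<bar>zX \<sigma> (fst rc) (snd rc)\<bar>) = \<infinity>"
proof (cases "chi < 1")
  case True
  have chi: "0 < chi"
    using assms(2,3,6) by (cases "chi = 0") auto
  define g where "g d = (((1 - d) / chi) *\<^sub>R sgn \<sigma>, - (chi *\<^sub>R sgn \<sigma>))" for d
  define K where "K = norm \<sigma> * sqrt (1 - chi\<^sup>2) / chi"
  have "chi\<^sup>2 < 1"
    using True chi by (simp add: abs_square_less_1)
  then have "0 < K"
    using assms(1) chi by (simp add: K_def)
  then have "filterlim (\<lambda>d. (1 - d) * K / d) at_top (at_right 0)"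
    by real_asymp
  moreover have "\<forall>\<^sub>F d in at_right 0. g d \<in> feasible rbar clo chi
                                      \<and> (1 - d) * K / d \<le> \<bar>zX \<sigma> (fst (g d)) (snd (g d))\<bar>"
    unfolding eventually_at_right[OF zero_less_one]
  proof (intro exI[of _ 1] conjI allI impI)
    fix d :: real
    assume d: "0 < d" "d < 1"
    have "(1 - d) / chi \<le> rbar"
      using assms(6) chi d by (simp add: divide_simps mult.commute)
    then show "g d \<in> feasible rbar clo chi"
      using collinear_in_feasible[of \<sigma> clo "(1 - d) / chi" rbar chi chi] assms True chi d
      by (simp add: g_def)
    have "zX \<sigma> (fst (g d)) (snd (g d)) = (1 - d) * K / d"
      using zX_collinear[OF assms(1), of chi "(1 - d) / chi"] chi by (simp add: g_def K_def)
    then show "(1 - d) * K / d \<le> \<bar>zX \<sigma> (fst (g d)) (snd (g d))\<bar>"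
      by (metis abs_ge_self)
  qed simp
  ultimately show ?thesis
    by (intro SUP_ereal_eq_infinity_if_filterlim[of _ g "at_right 0"])
      (auto elim: filterlim_at_top_mono eventually_mono)
next
  case False
  then have "chi = 1" "1 \<le> rbar"
    using assms(4,6) by auto
  define g where "g d = (1 *\<^sub>R sgn \<sigma>, - ((1 - d) *\<^sub>R sgn \<sigma>))" for d
  have "filterlim (\<lambda>d. norm \<sigma> * sqrt (1 - (1 - d)\<^sup>2) / d) at_top (at_right 0)"
    using assms(1) by real_asymp
  moreover have "0 < 1 - clo"
    using assms(5) by simp
  then have "\<forall>\<^sub>F d in at_right 0. g d \<in> feasible rbar clo chi
           \<and> norm \<sigma> * sqrt (1 - (1 - d)\<^sup>2) / d \<le> \<bar>zX \<sigma> (fst (g d)) (snd (g d))\<bar>"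
    unfolding eventually_at_right[OF \<open>0 < 1 - clo\<close>]
  proof (intro exI[of _ "1 - clo"] conjI allI impI)
    fix d :: real
    assume d: "0 < d" "d < 1 - clo"
    show "g d \<in> feasible rbar clo chi"
      using collinear_in_feasible[of \<sigma> clo 1 rbar "1 - d" chi] assms \<open>chi = 1\<close> \<open>1 \<le> rbar\<close> d
      by (simp add: g_def)
    have "zX \<sigma> (fst (g d)) (snd (g d)) = norm \<sigma> * sqrt (1 - (1 - d)\<^sup>2) / d"
      using zX_collinear[OF assms(1), of "1 - d" 1] assms(2) d by (simp add: g_def)
    then show "norm \<sigma> * sqrt (1 - (1 - d)\<^sup>2) / d \<le> \<bar>zX \<sigma> (fst (g d)) (snd (g d))\<bar>"
      by (metis abs_ge_self)
  qed simp_all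
  ultimately show ?thesis
    by (intro SUP_ereal_eq_infinity_if_filterlim[of _ g "at_right 0"])
      (auto elim: filterlim_at_top_mono eventually_mono)
qed

theorem mainTheorem14:
  fixes \<sigma> :: "real^'d" and rbar clo chi :: real
  assumes "\<sigma> \<noteq> 0" and "rbar \<ge> 0" and "0 \<le> clo" and "clo \<le> chi" and "chi \<le> 1" and "clo < 1"
  shows "(SUP rc \<in> {(r, c). norm r \<le> rbar \<and> clo \<le> norm c \<and> norm c \<le> chi \<and> norm c \<noteq> 1
                        \<and> r \<bullet> c \<noteq> -1}.
            ereal \<bar>zX \<sigma> (fst rc) (snd rc)\<bar>) = zbarX \<sigma> rbar clo chi"
proof (cases "rbar * chi < 1")
  case True
  then show ?thesis
    using SUP_abs_zX_feasible_finite[OF assms True]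
    by (simp add: feasible_def zbarX_def Let_def)
next
  case False
  then show ?thesis
    using SUP_abs_zX_feasible_infinite[OF assms(1,3-6)]
    by (simp add: feasible_def zbarX_def Let_def)
qed

end
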